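(* Consider the SPIMEX scheme for the multi-agent epidemic chemotaxis system described in the context. For every $k=0,1,2,\dots$, the Lagrange multiplier $\xi^{k+1}\in\mathbb{R}$ associated with the mass-conservation constraint in the KKT conditions of the projection step satisfies $\xi^{k+1}\ge0$.
   Context: Unknowns: $\bm\Phi=(S,E,P,A,I^+,I^-,R)$ (7 mobile agent densities), $H$ (hospitalized), $p$ (attractiveness field); $\bm\Psi=(\bm\Phi,H)=(\psi_1,\dots,\psi_8)$. Positive constants $D,\eta,\eta',\lambda,\beta,\delta_A,\delta_I^+,\delta_I^-,\delta_H,\delta_R,\bar\delta^+_{\mathcal P},\bar\delta^-_{\mathcal P}$, and $\rho,p_H\in[0,1]$; $p^0$ is a fixed smooth periodic function with $0<m_p\le p^0\le M_p$. The linear operator $\mathcal L$ acts by $(\mathcal L\bm\Phi)_S=\delta_RR$, $(\mathcal L\bm\Phi)_E=-\eta E$, $(\mathcal L\bm\Phi)_P=\eta E-\eta'P$, $(\mathcal L\bm\Phi)_A=\eta'(1-\rho)P-\delta_AA$, $(\mathcal L\bm\Phi)_{I^-}=\eta'\rho(1-p_H)P-\delta_I^-I^-$, $(\mathcal L\bm\Phi)_{I^+}=\eta'\rho p_HP-\delta_I^+I^+$, $(\mathcal L\bm\Phi)_R=\delta_AA+\delta_I^-I^--\delta_RR$. The nonlinear term $\mathcal N(\bm\Phi,H)$ has $S$-component $-\lambda(\beta(P+A)+I^-+I^+)S$, $E$-component $+\lambda(\beta(P+A)+I^-+I^+)S$, $R$-component $\delta_HH$, and all other components zero. Grid and discrete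 operators: periodic square $\Omega$ of side $L$, $h=L/N$, $X$ the periodic grid functions; $(D_xu)_{i+1/2,j}=(u_{i+1,j}-u_{i,j})/h$, $D_y$ analogous; $(d_xf)_{i,j}=(f_{i+1/2,j}-f_{i-1/2,j})/h$, $d_y$ analogous; $\nabla_h=(D_x,D_y)$, $\nabla_h\cdot(f^x,f^y)=d_xf^x+d_yf^y$, $\Delta_h=\nabla_h\cdot\nabla_h$; $\nabla_h\cdot(w\nabla_hv)=d_x(\bar wD_xv)+d_y(\bar wD_yv)$ with $\bar w$ face-centred averages of $w$; applied componentwise to vectors. $\langle u,v\rangle=h^2\sum_{i,j=1}^Nu_{i,j}v_{i,j}$, $\|u\|_{L^2}^2=\langle u,u\rangle$, $\|u\|_{H^1}^2=\|u\|_{L^2}^2+\|\nabla_hu\|_{L^2}^2$; $p^0$ denotes its grid restriction. Scheme: $\tau>0$; given initial grid functions $(\bm\Psi_h^0,p_h^0)$. Predictor for $k\ge1$: $\frac{\tilde{\bm\Phi}_h^{k+1}-\bm\Phi_h^k}{\tau}=\frac D8\Delta_h(\tilde{\bm\Phi}_h^{k+1}+\bm\Phi_h^k)-\frac{3D}4\nabla_h\cdot(\frac{\bm\Phi_h^k}{p_h^k+p^0}\nabla_h(p_h^k+p^0))+\frac D4\nabla_h\cdot(\frac{\bm\Phi_h^{k-1}}{p_h^{k-1}+p^0}\nabla_h(p_h^{k-1}+p^0))+\frac32\mathcal L\bm\Phi_h^k-\frac12\mathcal L\bm\Phi_h^{k-1}+\frac32\mathcal N(\bm\Phi_h^k,H_h^k)-\frac12\mathcal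 N(\bm\Phi_h^{k-1},H_h^{k-1})$, $\frac{\tilde H_h^{k+1}-H_h^k}{\tau}=\frac32\delta_I^+(I^+)_h^k-\frac12\delta_I^+(I^+)_h^{k-1}-\frac32\delta_HH_h^k+\frac12\delta_HH_h^{k-1}$, $\frac{\tilde p_h^{k+1}-p_h^k}{\tau}=\frac{\eta D}2\Delta_h(\tilde p_h^{k+1}+p_h^k)+\frac32[\bar\delta^+_{\mathcal P}(S_h^k+E_h^k+P_h^k+A_h^k+R_h^k)-\bar\delta^-_{\mathcal P}p_h^k]-\frac12[\bar\delta^+_{\mathcal P}(S_h^{k-1}+E_h^{k-1}+P_h^{k-1}+A_h^{k-1}+R_h^{k-1})-\bar\delta^-_{\mathcal P}p_h^{k-1}]$; for $k=0$: $\frac{\tilde{\bm\Phi}_h^1-\bm\Phi_h^0}{\tau}=\frac D8\Delta_h(\tilde{\bm\Phi}_h^1+\bm\Phi_h^0)-\frac D2\nabla_h\cdot(\frac{\bm\Phi_h^0}{p_h^0+p^0}\nabla_h(p_h^0+p^0))+\mathcal L\bm\Phi_h^0+\mathcal N(\bm\Phi_h^0,H_h^0)$, $\frac{\tilde p_h^1-p_h^0}{\tau}=\frac{\eta D}2\Delta_h(\tilde p_h^1+p_h^0)+\bar\delta^+_{\mathcal P}(S_h^0+E_h^0+P_h^0+A_h^0+R_h^0)-\bar\delta^-_{\mathcal P}p_h^0$, $\frac{\tilde H_h^1-H_h^0}{\tau}=\delta_I^+(I^+)_h^0-\delta_HH_h^0$. Corrector: $(\bm\Psi_h^{k+1},p_h^{k+1})$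 minimizes $\frac12(\sum_{i=1}^8\|\psi_i-\tilde\psi_{i,h}^{k+1}\|_{L^2}^2+\|p-\tilde p_h^{k+1}\|_{H^1}^2)$ subject to $\psi_i\ge0$ ($i=1,\dots,8$), $p\ge0$ and $\langle\sum_{i=1}^8\psi_i,1\rangle=\langle\sum_{i=1}^8\psi_{i,h}^0,1\rangle$; its KKT conditions read $\bm\Psi_h^{k+1}=\tilde{\bm\Psi}_h^{k+1}+\bm\lambda_h^{k+1}-\xi^{k+1}(1,\dots,1)^\top$, $(I-\Delta_h)p_h^{k+1}=(I-\Delta_h)\tilde p_h^{k+1}+\zeta_h^{k+1}$, $\lambda_{i,h}^{k+1}\psi_{i,h}^{k+1}=0$, $\zeta_h^{k+1}p_h^{k+1}=0$, $\lambda_{i,h}^{k+1}\ge0$, $\zeta_h^{k+1}\ge0$, together with the mass constraint, where $\bm\lambda_h^{k+1}\in X^8$, $\zeta_h^{k+1}\in X$, $\xi^{k+1}\in\mathbb{R}$. *)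

theory Defs
  imports "HOL-Analysis.Analysis"
begin

(* A grid function is a map on index pairs; only the
   indices (i,j) with i < N, j < N (standing for the paper's 1..N) matter.
   Face-centred quantities f_{i+1/2,j} are stored at index (i,j). *)
type_synonym grid = "nat \<times> nat \<Rightarrow> real"

definition nxt :: "nat \<Rightarrow> nat \<Rightarrow> nat" where "nxt N i = (i + 1) mod N"
definition prv :: "nat \<Rightarrow> nat \<Rightarrow> nat" where "prv N i = (i + N - 1) mod N"

definition Dx :: "nat \<Rightarrow> real \<Rightarrow> grid \<Rightarrow> grid" where
  "Dx N h u = (\<lambda>(i,j). (u (nxt N i, j) - u (i, j)) / h)"
definition Dy :: "nat \<Rightarrow> real \<Rightarrow> grid \<Rightarrow> grid" where
  "Dy N h u = (\<lambda>(i,j). (u (i, nxt N j) - u (i, j)) / h)"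
definition dx :: "nat \<Rightarrow> real \<Rightarrow> grid \<Rightarrow> grid" where
  "dx N h f = (\<lambda>(i,j). (f (i, j) - f (prv N i, j)) / h)"
definition dy :: "nat \<Rightarrow> real \<Rightarrow> grid \<Rightarrow> grid" where
  "dy N h f = (\<lambda>(i,j). (f (i, j) - f (i, prv N j)) / h)"

definition lap :: "nat \<Rightarrow> real \<Rightarrow> grid \<Rightarrow> grid" where
  "lap N h u = (\<lambda>x. dx N h (Dx N h u) x + dy N h (Dy N h u) x)"

definition avgx :: "nat \<Rightarrow> grid \<Rightarrow> grid" where
  "avgx N w = (\<lambda>(i,j). (w (i, j) + w (nxt N i, j)) / 2)"
definition avgy :: "nat \<Rightarrow> grid \<Rightarrow> grid" where
  "avgy N w = (\<lambda>(i,j). (w (i, j) + w (i, nxt N j)) / 2)"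

definition divwgrad :: "nat \<Rightarrow> real \<Rightarrow> grid \<Rightarrow> grid \<Rightarrow> grid" where
  "divwgrad N h w v = (\<lambda>x. dx N h (\<lambda>q. avgx N w q * Dx N h v q) x
                          + dy N h (\<lambda>q. avgy N w q * Dy N h v q) x)"

definition ip :: "nat \<Rightarrow> real \<Rightarrow> grid \<Rightarrow> grid \<Rightarrow> real" where
  "ip N h u v = h\<^sup>2 * (\<Sum>i<N. \<Sum>j<N. u (i, j) * v (i, j))"
definition L2sq :: "nat \<Rightarrow> real \<Rightarrow> grid \<Rightarrow> real" where
  "L2sq N h u = ip N h u u"
definition H1sq :: "nat \<Rightarrow> real \<Rightarrow> grid \<Rightarrow> real" where
  "H1sq N h u = L2sq N h u + L2sq N h (Dx N h u) + L2sq N h (Dy N h u)"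

record params =
  Dc :: real
  eta :: real
  eta' :: real
  lam :: real
  beta :: real
  dA :: real
  dIp :: real
  dIm :: real
  dH :: real
  dR :: real
  dPp :: real
  dPm :: real
  rho :: real
  pH :: real

definition admissible :: "params \<Rightarrow> bool" where
  "admissible c \<longleftrightarrow> Dc c > 0 \<and> eta c > 0 \<and> eta' c > 0 \<and> lam c > 0 \<and> beta c > 0
     \<and> dA c > 0 \<and> dIp c > 0 \<and> dIm c > 0 \<and> dH c > 0 \<and> dR c > 0
     \<and> dPp c > 0 \<and> dPm c > 0 \<and> 0 \<le> rho c \<and> rho c \<le> 1 \<and> 0 \<le> pH c \<and> pH c \<le> 1"

(* Component indices of Psi = (S,E,P,A,I+,I-,R,H): 0..7; Phi = components 0..6. *)
abbreviation (input) iS :: nat where "iS \<equiv> 0"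
abbreviation (input) iE :: nat where "iE \<equiv> 1"
abbreviation (input) iP :: nat where "iP \<equiv> 2"
abbreviation (input) iA :: nat where "iA \<equiv> 3"
abbreviation (input) iIp :: nat where "iIp \<equiv> 4"
abbreviation (input) iIm :: nat where "iIm \<equiv> 5"
abbreviation (input) iR :: nat where "iR \<equiv> 6"
abbreviation (input) iH :: nat where "iH \<equiv> 7"

definition Lop :: "params \<Rightarrow> (nat \<Rightarrow> grid) \<Rightarrow> nat \<Rightarrow> grid" where
  "Lop c \<phi> k x =
    (if k = iS then dR c * \<phi> iR x
     else if k = iE then - eta c * \<phi> iE x
     else if k = iP then eta c * \<phi> iE x - eta' c * \<phi> iP x
     else if k = iA then eta' c * (1 - rho c) * \<phi> iP x - dA c * \<phi> iA x
     else if k = iIp then eta' c * rho c * pH c * \<phi> iP x - dIp c * \<phi> iIp x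
     else if k = iIm then eta' c * rho c * (1 - pH c) * \<phi> iP x - dIm c * \<phi> iIm x
     else if k = iR then dA c * \<phi> iA x + dIm c * \<phi> iIm x - dR c * \<phi> iR x
     else 0)"

definition Nop :: "params \<Rightarrow> (nat \<Rightarrow> grid) \<Rightarrow> nat \<Rightarrow> grid" where
  "Nop c \<psi> k x =
    (let f = lam c * (beta c * (\<psi> iP x + \<psi> iA x) + \<psi> iIm x + \<psi> iIp x) * \<psi> iS x in
     if k = iS then - f
     else if k = iE then f
     else if k = iR then dH c * \<psi> iH x
     else 0)"

definition chem :: "nat \<Rightarrow> real \<Rightarrow> grid \<Rightarrow> grid \<Rightarrow> grid \<Rightarrow> grid" where
  "chem N h \<phi> p p0 = divwgrad N h (\<lambda>x. \<phi> x / (p x + p0 x)) (\<lambda>x. p x + p0 x)"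

definition srcP :: "(nat \<Rightarrow> grid) \<Rightarrow> grid" where
  "srcP \<psi> x = \<psi> iS x + \<psi> iE x + \<psi> iP x + \<psi> iA x + \<psi> iR x"

definition gridpts :: "nat \<Rightarrow> (nat \<times> nat) set" where
  "gridpts N = {..<N} \<times> {..<N}"

definition mass :: "nat \<Rightarrow> real \<Rightarrow> (nat \<Rightarrow> grid) \<Rightarrow> real" where
  "mass N h \<psi> = ip N h (\<lambda>x. \<Sum>c<8. \<psi> c x) (\<lambda>_. 1)"

definition feasible :: "nat \<Rightarrow> real \<Rightarrow> real \<Rightarrow> (nat \<Rightarrow> grid) \<Rightarrow> grid \<Rightarrow> bool" where
  "feasible N h M \<psi> p \<longleftrightarrow>
     (\<forall>c<8. \<forall>x\<in>gridpts N. \<psi> c x \<ge> 0) \<and> (\<forall>x\<in>gridpts N. p x \<ge> 0) \<and> mass N h \<psi> = M"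

definition cobj :: "nat \<Rightarrow> real \<Rightarrow> (nat \<Rightarrow> grid) \<Rightarrow> grid \<Rightarrow> (nat \<Rightarrow> grid) \<Rightarrow> grid \<Rightarrow> real" where
  "cobj N h t\<psi> tp \<psi> p =
     (1/2) * ((\<Sum>c<8. L2sq N h (\<lambda>x. \<psi> c x - t\<psi> c x)) + H1sq N h (\<lambda>x. p x - tp x))"

(* grid restriction of a function on the square; paper node (i,j) in 1..N
   corresponds to index (i-1,j-1) and location (i h, j h) *)
definition restr :: "real \<Rightarrow> (real \<times> real \<Rightarrow> real) \<Rightarrow> grid" where
  "restr h f = (\<lambda>(i,j). f (real (i + 1) * h, real (j + 1) * h))"

end

theory Submission
  imports Defs
begin

(* Summed over all eight compartments and all grid points, the predictor increment
   vanishes: the transport terms are discrete divergences, which telescope on the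
   periodic grid, and the reaction terms only exchange mass between compartments
   (H gains exactly the I+ outflow and passes its own outflow to R).  So the
   predictor conserves total mass, as does the corrector by its constraint.
   Summing the KKT relation Psi = tPsi + lambda - xi over the 8 N^2 unknowns then
   gives 8 N^2 xi = sum lambda >= 0. *)

lemma prv_nxt: "i < N \<Longrightarrow> prv N (nxt N i) = i"
  unfolding prv_def nxt_def by (cases "i + 1 = N") (auto simp: mod_if)

lemma nxt_prv: "i < N \<Longrightarrow> nxt N (prv N i) = i"
  unfolding prv_def nxt_def by (cases "i = 0") (auto simp: mod_if)

lemma bij_betw_prv: "N > 0 \<Longrightarrow> bij_betw (prv N) {..<N} {..<N}"
  by (rule bij_betwI[where g = "nxt N"]) (auto simp: prv_nxt nxt_prv, auto simp: prv_def nxt_def)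

lemma sum_prv_reindex:
  fixes g :: "nat \<Rightarrow> 'a::comm_monoid_add"
  assumes "N > 0"
  shows "(\<Sum>i<N. g (prv N i)) = (\<Sum>i<N. g i)"
  using sum.reindex_bij_betw[OF bij_betw_prv[OF assms], of g] by simp

lemma sum_gridpts: "(\<Sum>x\<in>gridpts N. f x) = (\<Sum>i<N. \<Sum>j<N. f (i, j))"
  unfolding gridpts_def by (simp add: sum.cartesian_product)

lemma sum_dx_eq_0: "N > 0 \<Longrightarrow> (\<Sum>x\<in>gridpts N. dx N h f x) = 0"
  using sum_prv_reindex[of N "\<lambda>i. \<Sum>j<N. f (i, j)"]
  by (simp add: sum_gridpts dx_def sum_subtractf flip: sum_divide_distrib)

lemma sum_dy_eq_0: "N > 0 \<Longrightarrow> (\<Sum>x\<in>gridpts N. dy N h f x) = 0"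
  using sum_prv_reindex[of N "\<lambda>j. f (_, j)"]
  by (simp add: sum_gridpts dy_def sum_subtractf flip: sum_divide_distrib)

lemma sum_lap_eq_0: "N > 0 \<Longrightarrow> (\<Sum>x\<in>gridpts N. lap N h u x) = 0"
  by (simp add: lap_def sum.distrib sum_dx_eq_0 sum_dy_eq_0)

lemma sum_chem_eq_0: "N > 0 \<Longrightarrow> (\<Sum>x\<in>gridpts N. chem N h \<phi> p p0 x) = 0"
  by (simp add: chem_def divwgrad_def sum.distrib sum_dx_eq_0 sum_dy_eq_0)

lemma sum_Lop_Nop:
  "(\<Sum>c<7. Lop prm \<phi> c x + Nop prm \<phi> c x) = dH prm * \<phi> iH x - dIp prm * \<phi> iIp x"
  by (simp add: Lop_def Nop_def Let_def eval_nat_numeral algebra_simps)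

lemma mass_eq_sum_gridpts: "mass N h \<psi> = h\<^sup>2 * (\<Sum>x\<in>gridpts N. \<Sum>c<8. \<psi> c x)"
  by (simp add: mass_def ip_def sum_gridpts)

lemma mass_conserved_by_rates:
  fixes a b \<tau> :: real and d :: "nat \<Rightarrow> grid" and \<phi> \<phi>' :: "nat \<Rightarrow> grid"
  assumes "\<tau> \<noteq> 0"
    and Phi: "\<And>c x. c < 7 \<Longrightarrow> x \<in> gridpts N \<Longrightarrow>
      (t\<psi> c x - \<psi> c x) / \<tau> = d c x
        + a * (Lop prm \<phi> c x + Nop prm \<phi> c x) + b * (Lop prm \<phi>' c x + Nop prm \<phi>' c x)"
    and H: "\<And>x. x \<in> gridpts N \<Longrightarrow>
      (t\<psi> iH x - \<psi> iH x) / \<tau> = a * (dIp prm * \<phi> iIp x - dH prm * \<phi> iH x)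
        + b * (dIp prm * \<phi>' iIp x - dH prm * \<phi>' iH x)"
    and conservative: "\<And>c. c < 7 \<Longrightarrow> (\<Sum>x\<in>gridpts N. d c x) = 0"
  shows "mass N h t\<psi> = mass N h \<psi>"
proof -
  have pointwise: "(\<Sum>c<8. t\<psi> c x - \<psi> c x) = \<tau> * (\<Sum>c<7. d c x)"
    if x: "x \<in> gridpts N" for x
  proof -
    have "(\<Sum>c<7. t\<psi> c x - \<psi> c x) = \<tau> * (\<Sum>c<7. d c x
        + a * (Lop prm \<phi> c x + Nop prm \<phi> c x) + b * (Lop prm \<phi>' c x + Nop prm \<phi>' c x))"
      unfolding sum_distrib_left using Phi[OF _ x] \<open>\<tau> \<noteq> 0\<close>
      by (intro sum.cong) (auto simp: field_simps)
    also have "\<dots> = \<tau> * ((\<Sum>c<7. d c x)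
        + a * (dH prm * \<phi> iH x - dIp prm * \<phi> iIp x) + b * (dH prm * \<phi>' iH x - dIp prm * \<phi>' iIp x))"
      using sum_Lop_Nop[of prm \<phi> x] sum_Lop_Nop[of prm \<phi>' x]
      by (simp add: sum.distrib flip: sum_distrib_left)
    finally show ?thesis
      using H[OF x] \<open>\<tau> \<noteq> 0\<close> by (simp add: eval_nat_numeral field_simps)
  qed
  have "(\<Sum>x\<in>gridpts N. \<Sum>c<8. t\<psi> c x - \<psi> c x) = \<tau> * (\<Sum>c<7. \<Sum>x\<in>gridpts N. d c x)"
    by (simp add: pointwise sum_distrib_left sum.swap[of _ "gridpts N"])
  also have "\<dots> = 0"
    by (simp add: conservative)
  finally show ?thesis
    by (simp add: mass_eq_sum_gridpts sum_subtractf)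
qed

lemma euler_predictor_conserves_mass:
  assumes "N > 0" "\<tau> \<noteq> 0"
    and Phi: "\<And>c x. c < 7 \<Longrightarrow> x \<in> gridpts N \<Longrightarrow>
      (t\<psi> c x - \<psi> c x) / \<tau> =
        Dc prm / 8 * lap N h (\<lambda>y. t\<psi> c y + \<psi> c y) x
        - Dc prm / 2 * chem N h (\<psi> c) p p\<^sub>0 x
        + Lop prm \<psi> c x + Nop prm \<psi> c x"
    and H: "\<And>x. x \<in> gridpts N \<Longrightarrow>
      (t\<psi> iH x - \<psi> iH x) / \<tau> = dIp prm * \<psi> iIp x - dH prm * \<psi> iH x"
  shows "mass N h t\<psi> = mass N h \<psi>"
proof -
  define d where "d c x = Dc prm / 8 * lap N h (\<lambda>y. t\<psi> c y + \<psi> c y) x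
    - Dc prm / 2 * chem N h (\<psi> c) p p\<^sub>0 x" for c x
  have rate: "(t\<psi> c x - \<psi> c x) / \<tau> = d c x
      + 1 * (Lop prm \<psi> c x + Nop prm \<psi> c x) + 0 * (Lop prm \<psi> c x + Nop prm \<psi> c x)"
    if "c < 7" "x \<in> gridpts N" for c x
    using Phi[OF that] by (simp add: d_def)
  have rate_H: "(t\<psi> iH x - \<psi> iH x) / \<tau> = 1 * (dIp prm * \<psi> iIp x - dH prm * \<psi> iH x)
      + 0 * (dIp prm * \<psi> iIp x - dH prm * \<psi> iH x)" if "x \<in> gridpts N" for x
    using H[OF that] by simp
  have conservative: "(\<Sum>x\<in>gridpts N. d c x) = 0" for c
    unfolding d_def
    by (simp only: sum_subtractf flip: sum_distrib_left)
      (simp add: \<open>N > 0\<close> sum_lap_eq_0 sum_chem_eq_0)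
  show ?thesis
    by (rule mass_conserved_by_rates[OF \<open>\<tau> \<noteq> 0\<close> rate rate_H conservative])
qed

lemma ab2_predictor_conserves_mass:
  assumes "N > 0" "\<tau> \<noteq> 0"
    and Phi: "\<And>c x. c < 7 \<Longrightarrow> x \<in> gridpts N \<Longrightarrow>
      (t\<psi> c x - \<psi> c x) / \<tau> =
        Dc prm / 8 * lap N h (\<lambda>y. t\<psi> c y + \<psi> c y) x
        - 3 * Dc prm / 4 * chem N h (\<psi> c) p p\<^sub>0 x
        + Dc prm / 4 * chem N h (\<psi>' c) p' p\<^sub>0 x
        + 3 / 2 * Lop prm \<psi> c x - 1 / 2 * Lop prm \<psi>' c x
        + 3 / 2 * Nop prm \<psi> c x - 1 / 2 * Nop prm \<psi>' c x"
    and H: "\<And>x. x \<in> gridpts N \<Longrightarrow>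
      (t\<psi> iH x - \<psi> iH x) / \<tau> =
        3 / 2 * dIp prm * \<psi> iIp x - 1 / 2 * dIp prm * \<psi>' iIp x
        - 3 / 2 * dH prm * \<psi> iH x + 1 / 2 * dH prm * \<psi>' iH x"
  shows "mass N h t\<psi> = mass N h \<psi>"
proof -
  define d where "d c x = Dc prm / 8 * lap N h (\<lambda>y. t\<psi> c y + \<psi> c y) x
    - 3 * Dc prm / 4 * chem N h (\<psi> c) p p\<^sub>0 x
    + Dc prm / 4 * chem N h (\<psi>' c) p' p\<^sub>0 x" for c x
  have rate: "(t\<psi> c x - \<psi> c x) / \<tau> = d c x
      + 3 / 2 * (Lop prm \<psi> c x + Nop prm \<psi> c x) + - 1 / 2 * (Lop prm \<psi>' c x + Nop prm \<psi>' c x)"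
    if "c < 7" "x \<in> gridpts N" for c x
    using Phi[OF that] unfolding d_def distrib_left by linarith
  have rate_H: "(t\<psi> iH x - \<psi> iH x) / \<tau>
      = 3 / 2 * (dIp prm * \<psi> iIp x - dH prm * \<psi> iH x)
      + - 1 / 2 * (dIp prm * \<psi>' iIp x - dH prm * \<psi>' iH x)" if "x \<in> gridpts N" for x
    using H[OF that] by (simp add: algebra_simps)
  have conservative: "(\<Sum>x\<in>gridpts N. d c x) = 0" for c
    unfolding d_def
    by (simp only: sum.distrib sum_subtractf flip: sum_distrib_left)
      (simp add: \<open>N > 0\<close> sum_lap_eq_0 sum_chem_eq_0)
  show ?thesis
    by (rule mass_conserved_by_rates[OF \<open>\<tau> \<noteq> 0\<close> rate rate_H conservative])
qed

lemma mass_multiplier_nonneg: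
  fixes \<xi> :: real
  assumes "N > 0" "h \<noteq> 0" "mass N h \<psi> = mass N h t\<psi>"
    and shift: "\<And>c x. c < 8 \<Longrightarrow> x \<in> gridpts N \<Longrightarrow> \<psi> c x = t\<psi> c x + lmb c x - \<xi>"
    and lmb_nonneg: "\<And>c x. c < 8 \<Longrightarrow> x \<in> gridpts N \<Longrightarrow> lmb c x \<ge> 0"
  shows "\<xi> \<ge> 0"
proof -
  have "(\<Sum>x\<in>gridpts N. \<Sum>c<8. \<psi> c x) = (\<Sum>x\<in>gridpts N. \<Sum>c<8. t\<psi> c x)"
    using assms(2,3) by (simp add: mass_eq_sum_gridpts)
  moreover have "(\<Sum>x\<in>gridpts N. \<Sum>c<8. \<psi> c x) = (\<Sum>x\<in>gridpts N. \<Sum>c<8. t\<psi> c x)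
      + (\<Sum>x\<in>gridpts N. \<Sum>c<8. lmb c x) - 8 * real (card (gridpts N)) * \<xi>"
    by (simp add: shift sum.distrib sum_subtractf)
  ultimately have "8 * real (card (gridpts N)) * \<xi> = (\<Sum>x\<in>gridpts N. \<Sum>c<8. lmb c x)"
    by linarith
  moreover have "(\<Sum>x\<in>gridpts N. \<Sum>c<8. lmb c x) \<ge> 0"
    by (intro sum_nonneg) (simp add: lmb_nonneg)
  moreover have "card (gridpts N) > 0"
    using \<open>N > 0\<close> by (simp add: gridpts_def)
  ultimately show ?thesis
    by (metis zero_le_mult_iff of_nat_0_less_iff mult_pos_pos zero_less_numeral not_le)
qed

theorem proposition4p1:
  fixes prm :: params and Lside :: real and N :: nat and h \<tau> m\<^sub>p M\<^sub>p :: real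
    and p0 :: "real \<times> real \<Rightarrow> real"
    and \<Psi> t\<Psi> lmb :: "nat \<Rightarrow> nat \<Rightarrow> grid"
    and p tp \<zeta> :: "nat \<Rightarrow> grid" and \<xi> :: "nat \<Rightarrow> real"
  assumes prm: "admissible prm"
    and L: "Lside > 0" and N: "N > 0" and h: "h = Lside / real N" and tau: "\<tau> > 0"
    and p0_smooth: "continuous_on UNIV p0"
    and p0_per: "\<And>x y. p0 (x + Lside, y) = p0 (x, y) \<and> p0 (x, y + Lside) = p0 (x, y)"
    and p0_bnd: "0 < m\<^sub>p" "\<And>z. m\<^sub>p \<le> p0 z \<and> p0 z \<le> M\<^sub>p"
    \<comment> \<open>predictor, k = 0\<close>
    and pred0_Phi: "\<And>c x. c < 7 \<Longrightarrow> x \<in> gridpts N \<Longrightarrow>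
        (t\<Psi> 1 c x - \<Psi> 0 c x) / \<tau> =
          Dc prm / 8 * lap N h (\<lambda>y. t\<Psi> 1 c y + \<Psi> 0 c y) x
          - Dc prm / 2 * chem N h (\<Psi> 0 c) (p 0) (restr h p0) x
          + Lop prm (\<Psi> 0) c x + Nop prm (\<Psi> 0) c x"
    and pred0_p: "\<And>x. x \<in> gridpts N \<Longrightarrow>
        (tp 1 x - p 0 x) / \<tau> =
          eta prm * Dc prm / 2 * lap N h (\<lambda>y. tp 1 y + p 0 y) x
          + dPp prm * srcP (\<Psi> 0) x - dPm prm * p 0 x"
    and pred0_H: "\<And>x. x \<in> gridpts N \<Longrightarrow>
        (t\<Psi> 1 iH x - \<Psi> 0 iH x) / \<tau> = dIp prm * \<Psi> 0 iIp x - dH prm * \<Psi> 0 iH x"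
    \<comment> \<open>predictor, k \<ge> 1\<close>
    and pred_Phi: "\<And>k c x. k \<ge> 1 \<Longrightarrow> c < 7 \<Longrightarrow> x \<in> gridpts N \<Longrightarrow>
        (t\<Psi> (k + 1) c x - \<Psi> k c x) / \<tau> =
          Dc prm / 8 * lap N h (\<lambda>y. t\<Psi> (k + 1) c y + \<Psi> k c y) x
          - 3 * Dc prm / 4 * chem N h (\<Psi> k c) (p k) (restr h p0) x
          + Dc prm / 4 * chem N h (\<Psi> (k - 1) c) (p (k - 1)) (restr h p0) x
          + 3 / 2 * Lop prm (\<Psi> k) c x - 1 / 2 * Lop prm (\<Psi> (k - 1)) c x
          + 3 / 2 * Nop prm (\<Psi> k) c x - 1 / 2 * Nop prm (\<Psi> (k - 1)) c x"
    and pred_H: "\<And>k x. k \<ge> 1 \<Longrightarrow> x \<in> gridpts N \<Longrightarrow>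
        (t\<Psi> (k + 1) iH x - \<Psi> k iH x) / \<tau> =
          3 / 2 * dIp prm * \<Psi> k iIp x - 1 / 2 * dIp prm * \<Psi> (k - 1) iIp x
          - 3 / 2 * dH prm * \<Psi> k iH x + 1 / 2 * dH prm * \<Psi> (k - 1) iH x"
    and pred_p: "\<And>k x. k \<ge> 1 \<Longrightarrow> x \<in> gridpts N \<Longrightarrow>
        (tp (k + 1) x - p k x) / \<tau> =
          eta prm * Dc prm / 2 * lap N h (\<lambda>y. tp (k + 1) y + p k y) x
          + 3 / 2 * (dPp prm * srcP (\<Psi> k) x - dPm prm * p k x)
          - 1 / 2 * (dPp prm * srcP (\<Psi> (k - 1)) x - dPm prm * p (k - 1) x)"
    \<comment> \<open>corrector: (Psi^{k+1}, p^{k+1}) is the constrained minimiser\<close>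
    and corr_min: "\<And>k. feasible N h (mass N h (\<Psi> 0)) (\<Psi> (k + 1)) (p (k + 1))
        \<and> (\<forall>\<psi> q. feasible N h (mass N h (\<Psi> 0)) \<psi> q \<longrightarrow>
             cobj N h (t\<Psi> (k + 1)) (tp (k + 1)) (\<Psi> (k + 1)) (p (k + 1))
               \<le> cobj N h (t\<Psi> (k + 1)) (tp (k + 1)) \<psi> q)"
    \<comment> \<open>its KKT conditions with multipliers lambda, zeta, xi\<close>
    and kkt_Psi: "\<And>k c x. c < 8 \<Longrightarrow> x \<in> gridpts N \<Longrightarrow>
        \<Psi> (k + 1) c x = t\<Psi> (k + 1) c x + lmb (k + 1) c x - \<xi> (k + 1)"
    and kkt_p: "\<And>k x. x \<in> gridpts N \<Longrightarrow>
        p (k + 1) x - lap N h (p (k + 1)) x = tp (k + 1) x - lap N h (tp (k + 1)) x + \<zeta> (k + 1) x"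
    and kkt_compl: "\<And>k c x. c < 8 \<Longrightarrow> x \<in> gridpts N \<Longrightarrow>
        lmb (k + 1) c x * \<Psi> (k + 1) c x = 0 \<and> lmb (k + 1) c x \<ge> 0"
    and kkt_compl_p: "\<And>k x. x \<in> gridpts N \<Longrightarrow>
        \<zeta> (k + 1) x * p (k + 1) x = 0 \<and> \<zeta> (k + 1) x \<ge> 0"
    and kkt_mass: "\<And>k. mass N h (\<Psi> (k + 1)) = mass N h (\<Psi> 0)"
  shows "\<forall>k. \<xi> (k + 1) \<ge> 0"
proof
  fix k
  have "h \<noteq> 0"
    using L N h by simp
  have "\<tau> \<noteq> 0"
    using tau by simp
  have "mass N h (t\<Psi> (k + 1)) = mass N h (\<Psi> k)"
  proof (cases "k = 0")
    case True
    then show ?thesis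
      using euler_predictor_conserves_mass[OF N \<open>\<tau> \<noteq> 0\<close> pred0_Phi pred0_H] by simp
  next
    case False
    then have "k \<ge> 1"
      by simp
    show ?thesis
      by (rule ab2_predictor_conserves_mass[OF N \<open>\<tau> \<noteq> 0\<close> pred_Phi[OF \<open>k \<ge> 1\<close>] pred_H[OF \<open>k \<ge> 1\<close>]])
  qed
  moreover have "mass N h (\<Psi> k) = mass N h (\<Psi> 0)"
    using kkt_mass by (cases k) auto
  ultimately have "mass N h (\<Psi> (k + 1)) = mass N h (t\<Psi> (k + 1))"
    using kkt_mass by simp
  then show "\<xi> (k + 1) \<ge> 0"
    by (rule mass_multiplier_nonneg[OF N \<open>h \<noteq> 0\<close> _ kkt_Psi kkt_compl[THEN conjunct2]])
qed

end
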